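(* Let $q\ge2$ be fixed. There is a function $\varepsilon(n)\to0$ as $n\to\infty$ such that every $\mathcal{C}\subseteq\Sigma_q^n$ which is a $2$-read $(n,3)_q$-code, or which is a classical $(n,2;\mathcal{I}_1)_q$-reconstruction code, satisfies $r(\mathcal{C})\ge\log_q\log_q n-\varepsilon(n)$; i.e. $r(\mathcal{C})\ge\log_q\log_q n-o(1)$.
   Context: $\Sigma_q=\{0,\dots,q-1\}$. For $\boldsymbol{x}\in\Sigma_q^n$, $x[i]$ is its $i$-th entry, with $x[i]=0$ for $i\notin[1,n]$. $\mathcal{R}(\boldsymbol{x})$ is the vector of length $n+1$ whose $i$-th entry is the multiset $\{\{x[i-1],x[i]\}\}$. $\mathcal{C}\subseteq\Sigma_q^n$ is a $2$-read $(n,d)_q$-code if $d_H(\mathcal{R}(\boldsymbol{x}),\mathcal{R}(\boldsymbol{y}))\ge d$ for all distinct $\boldsymbol{x},\boldsymbol{y}\in\mathcal{C}$ ($d_H$ = Hamming distance). $\mathcal{I}_1(\boldsymbol{x})$ is the set of sequences of length $n+1$ obtained from $\boldsymbol{x}$ by inserting exactly one symbol of $\Sigma_q$; $\mathcal{C}$ is a classical $(n,2;\mathcal{I}_1)_q$-reconstruction code if $|\mathcal{I}_1(\boldsymbol{x})\cap\mathcal{I}_1(\boldsymbol{y})|\le1$ for all distinct $\boldsymbol{x},\boldsymbol{y}\in\mathcal{C}$. Redundancy: $r(\mathcal{C})=n-\log_q|\mathcal{C}|$. *)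

theory Defs
  imports Complex_Main "HOL-Library.Multiset"
begin

definition seqs :: "nat \<Rightarrow> nat \<Rightarrow> nat list set" where
  "seqs q n = {x. length x = n \<and> set x \<subseteq> {..<q}}"

text \<open>1-indexed entry x[i], equal to 0 outside [1,n].\<close>
definition entry :: "nat list \<Rightarrow> nat \<Rightarrow> nat" where
  "entry x i = (if 1 \<le> i \<and> i \<le> length x then x ! (i - 1) else 0)"

definition read2 :: "nat list \<Rightarrow> nat multiset list" where
  "read2 x = map (\<lambda>i. {# entry x (i - 1), entry x i #}) [1..<length x + 2]"

definition hamming :: "'a list \<Rightarrow> 'a list \<Rightarrow> nat" where
  "hamming u v = card {i. i < length u \<and> u ! i \<noteq> v ! i}"

definition two_read_code :: "nat \<Rightarrow> nat \<Rightarrow> nat \<Rightarrow> nat list set \<Rightarrow> bool" where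
  "two_read_code q n d C \<longleftrightarrow> C \<subseteq> seqs q n \<and>
     (\<forall>x\<in>C. \<forall>y\<in>C. x \<noteq> y \<longrightarrow> hamming (read2 x) (read2 y) \<ge> d)"

definition ins1 :: "nat \<Rightarrow> nat list \<Rightarrow> nat list set" where
  "ins1 q x = {take i x @ a # drop i x | i a. i \<le> length x \<and> a < q}"

definition recon_code :: "nat \<Rightarrow> nat \<Rightarrow> nat list set \<Rightarrow> bool" where
  "recon_code q n C \<longleftrightarrow> C \<subseteq> seqs q n \<and>
     (\<forall>x\<in>C. \<forall>y\<in>C. x \<noteq> y \<longrightarrow> card (ins1 q x \<inter> ins1 q y) \<le> 1)"

definition redundancy :: "nat \<Rightarrow> nat \<Rightarrow> nat list set \<Rightarrow> real" where
  "redundancy q n C = real n - log (real q) (real (card C))"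

end

theory Submission
  imports Defs "HOL-Real_Asymp.Real_Asymp"
begin

text \<open>Neither kind of code can contain two words u @ alt a k @ v and u @ alt (a + 1) k @ v that
  differ by flipping an alternating segment: their 2-read vectors differ in at most two places, and
  they have two common supersequences of length n + 1. Cut words into blocks of length L. The L + 1
  words shifted_alt L j, alternating with a phase shift at position j \<le> L, pairwise differ by such a
  flip. Replacing the first block of a codeword that lies in this family by each of its members
  yields L + 1 words, and these clouds are disjoint for distinct codewords; there are at most
  (q ^ L - L - 1) ^ (n div L) * q ^ (n mod L) words with no such block. Hence
  card C \<le> q ^ n * (1 / (L + 1) + exp (1 - n / q ^ L)), and L = floor (l - sqrt l) with l = log q n
  makes the exponential term negligible, so r(C) \<ge> log q (L + 1) - o(1) = log q l - o(1).\<close>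

definition alt :: "nat \<Rightarrow> nat \<Rightarrow> nat list" where
  "alt a k = map (\<lambda>i. (a + i) mod 2) [0..<k]"

lemma length_alt [simp]: "length (alt a k) = k"
  by (simp add: alt_def)

lemma nth_alt [simp]: "i < k \<Longrightarrow> alt a k ! i = (a + i) mod 2"
  by (simp add: alt_def)

lemma set_alt_subset: "set (alt a k) \<subseteq> {..<2}"
  by (auto simp: alt_def)

lemma alt_add: "alt a (j + k) = alt a j @ alt (a + j) k"
  by (rule nth_equalityI) (auto simp: nth_append add.assoc)

lemma alt_add_2: "alt (a + 2) k = alt a k"
  by (rule nth_equalityI) auto

lemma alt_Suc: "alt a (Suc k) = a mod 2 # alt (Suc a) k"
  using alt_add[of a 1 k] by (simp add: alt_def)

lemma alt_Suc_snoc: "alt a (Suc k) = alt a k @ [(a + k) mod 2]"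
  using alt_add[of a k 1] by (simp add: alt_def)

lemma alt_flip_neq: "0 < k \<Longrightarrow> u @ alt a k @ v \<noteq> u @ alt (Suc a) k @ v"
proof
  assume "0 < k" "u @ alt a k @ v = u @ alt (Suc a) k @ v"
  then have "alt a k ! 0 = alt (Suc a) k ! 0" by simp
  with \<open>0 < k\<close> show False by simp presburger
qed

definition alt_flip_free :: "nat list set \<Rightarrow> bool" where
  "alt_flip_free C \<longleftrightarrow>
    (\<forall>u v a k. 0 < k \<longrightarrow> u @ alt a k @ v \<in> C \<longrightarrow> u @ alt (Suc a) k @ v \<notin> C)"

lemma insert_in_ins1: "c < q \<Longrightarrow> u @ c # v \<in> ins1 q (u @ v)"
  unfolding ins1_def by (rule CollectI, rule exI[of _ "length u"], rule exI[of _ c]) simp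

lemma finite_ins1: "finite (ins1 q x)"
proof -
  have "ins1 q x = (\<lambda>(i, a). take i x @ a # drop i x) ` ({..length x} \<times> {..<q})"
    unfolding ins1_def by auto
  then show ?thesis by simp
qed

lemma card_ins1_alt_flip_ge:
  assumes "2 \<le> q"
  shows "2 \<le> card (ins1 q (u @ alt a k @ v) \<inter> ins1 q (u @ alt (Suc a) k @ v))"
proof -
  let ?x = "u @ alt a k @ v" and ?y = "u @ alt (Suc a) k @ v"
  let ?z = "u @ alt a (Suc k) @ v" and ?z' = "u @ alt (Suc a) (Suc k) @ v"
  have bit: "b mod 2 < q" for b :: nat using assms by linarith
  have "?z \<in> ins1 q ?x"
    using insert_in_ins1[OF bit, of "u @ alt a k" "a + k" v] by (simp add: alt_Suc_snoc)
  moreover have "?z \<in> ins1 q ?y"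
    using insert_in_ins1[OF bit, of u a "alt (Suc a) k @ v"] by (simp add: alt_Suc)
  moreover have "?z' \<in> ins1 q ?y"
    using insert_in_ins1[OF bit, of "u @ alt (Suc a) k" "Suc a + k" v] by (simp add: alt_Suc_snoc)
  moreover have "?z' \<in> ins1 q ?x"
    using insert_in_ins1[OF bit, of u "Suc a" "alt a k @ v"] alt_add_2[of a k] by (simp add: alt_Suc)
  moreover have "?z \<noteq> ?z'"
    using alt_flip_neq[of "Suc k" u a v] by simp
  ultimately have "card {?z, ?z'} \<le> card (ins1 q ?x \<inter> ins1 q ?y)"
    by (intro card_mono) (simp_all add: finite_ins1)
  with \<open>?z \<noteq> ?z'\<close> show ?thesis by simp
qed

lemma nth_read2: "i < length z + 1 \<Longrightarrow> read2 z ! i = {# entry z i, entry z (Suc i) #}"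
  unfolding read2_def by (simp del: upt_Suc)

lemma length_read2 [simp]: "length (read2 z) = length z + 1"
  unfolding read2_def length_map length_upt by simp

lemma alt_pair_mset: "{# p mod 2, Suc p mod 2 #} = {# 0, 1 :: nat #}"
  by (cases "p mod 2 = 0") (auto simp: mod_Suc add_mset_commute)

lemma hamming_read2_alt_flip_le:
  "hamming (read2 (u @ alt a k @ v)) (read2 (u @ alt (Suc a) k @ v)) \<le> 2"
proof -
  let ?x = "u @ alt a k @ v" and ?y = "u @ alt (Suc a) k @ v"
  have outside: "entry ?x j = entry ?y j" if "j \<le> length u \<or> length u + k < j" for j
    using that unfolding entry_def by (auto simp: nth_append)
  have inside: "read2 ?x ! i = {# 0, 1 #} \<and> read2 ?y ! i = {# 0, 1 #}"
    if "length u < i" "i < length u + k" for i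
  proof -
    define p where "p = i - Suc (length u)"
    have i: "i = length u + Suc p" "Suc p < k" using that unfolding p_def by linarith+
    have "entry ?x i = (a + p) mod 2" "entry ?x (Suc i) = Suc (a + p) mod 2"
      "entry ?y i = Suc (a + p) mod 2" "entry ?y (Suc i) = Suc (Suc (a + p)) mod 2"
      using i unfolding entry_def by (auto simp: nth_append)
    then show ?thesis
      using that alt_pair_mset[of "a + p"] alt_pair_mset[of "Suc (a + p)"]
      by (simp add: nth_read2)
  qed
  have "{i. i < length (read2 ?x) \<and> read2 ?x ! i \<noteq> read2 ?y ! i} \<subseteq> {length u, length u + k}"
  proof (rule subsetI, rule ccontr)
    fix i assume "i \<in> {i. i < length (read2 ?x) \<and> read2 ?x ! i \<noteq> read2 ?y ! i}"
      and "i \<notin> {length u, length u + k}"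
    then have i: "i < length ?x + 1" "read2 ?x ! i \<noteq> read2 ?y ! i"
      and "i \<noteq> length u" "i \<noteq> length u + k" by auto
    then consider "Suc i \<le> length u" | "length u < i" "i < length u + k" | "length u + k < i"
      by linarith
    then show False
    proof cases
      case 2
      then show False using i(2) inside by simp
    qed (use i outside[of i] outside[of "Suc i"] in \<open>simp_all add: nth_read2\<close>)
  qed
  then have "hamming (read2 ?x) (read2 ?y) \<le> card {length u, length u + k}"
    unfolding hamming_def by (intro card_mono) simp_all
  also have "\<dots> \<le> 2" by (simp add: card_insert_le_m1)
  finally show ?thesis .
qed

lemma two_read_code_alt_flip_free: "two_read_code q n 3 C \<Longrightarrow> alt_flip_free C"
  unfolding alt_flip_free_def
proof (intro allI impI notI)
  fix u v a k
  assume "two_read_code q n 3 C" "0 < k" "u @ alt a k @ v \<in> C" "u @ alt (Suc a) k @ v \<in> C"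
  then have "3 \<le> hamming (read2 (u @ alt a k @ v)) (read2 (u @ alt (Suc a) k @ v))"
    using alt_flip_neq unfolding two_read_code_def by blast
  then show False using hamming_read2_alt_flip_le[of u a k v] by linarith
qed

lemma recon_code_alt_flip_free: "2 \<le> q \<Longrightarrow> recon_code q n C \<Longrightarrow> alt_flip_free C"
  unfolding alt_flip_free_def
proof (intro allI impI notI)
  fix u v a k
  assume q: "2 \<le> q"
    and "recon_code q n C" "0 < k" "u @ alt a k @ v \<in> C" "u @ alt (Suc a) k @ v \<in> C"
  then have "card (ins1 q (u @ alt a k @ v) \<inter> ins1 q (u @ alt (Suc a) k @ v)) \<le> 1"
    using alt_flip_neq unfolding recon_code_def by blast
  then show False using card_ins1_alt_flip_ge[OF q, of u a k v] by linarith
qed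

definition shifted_alt :: "nat \<Rightarrow> nat \<Rightarrow> nat list" where
  "shifted_alt L j = alt 1 j @ alt j (L - j)"

lemma shifted_alt_split:
  assumes "j < k" "k \<le> L"
  shows "shifted_alt L j = alt 1 j @ alt j (k - j) @ alt k (L - k)"
    and "shifted_alt L k = alt 1 j @ alt (Suc j) (k - j) @ alt k (L - k)"
proof -
  have "L - j = (k - j) + (L - k)" using assms by simp
  then show "shifted_alt L j = alt 1 j @ alt j (k - j) @ alt k (L - k)"
    unfolding shifted_alt_def using alt_add[of j "k - j" "L - k"] assms by simp
  have "alt 1 k = alt 1 j @ alt (Suc j) (k - j)"
    using alt_add[of 1 j "k - j"] assms by simp
  then show "shifted_alt L k = alt 1 j @ alt (Suc j) (k - j) @ alt k (L - k)"
    unfolding shifted_alt_def by simp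
qed

lemma shifted_alt_in_seqs: "j \<le> L \<Longrightarrow> 2 \<le> q \<Longrightarrow> shifted_alt L j \<in> seqs q L"
  unfolding seqs_def shifted_alt_def using set_alt_subset by fastforce

lemma inj_on_shifted_alt: "inj_on (shifted_alt L) {..L}"
proof -
  have "shifted_alt L j \<noteq> shifted_alt L k" if "j < k" "k \<le> L" for j k
    using shifted_alt_split[OF that] alt_flip_neq[of "k - j"] that by simp
  then show ?thesis by (metis atMost_iff inj_onI linorder_neqE_nat)
qed

lemma alt_flip_free_shifted_alt_eq:
  assumes "alt_flip_free C" "j \<le> L" "k \<le> L"
    and "u @ shifted_alt L j @ v \<in> C" "u @ shifted_alt L k @ v \<in> C"
  shows "j = k"
proof -
  have "\<not> (u @ shifted_alt L j @ v \<in> C \<and> u @ shifted_alt L k @ v \<in> C)"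
    if "j < k" "k \<le> L" for j k
    using assms(1) shifted_alt_split[OF that] that
    unfolding alt_flip_free_def by (metis append.assoc zero_less_diff)
  with assms show ?thesis by (metis linorder_neqE_nat)
qed

definition block :: "nat \<Rightarrow> 'a list \<Rightarrow> nat \<Rightarrow> 'a list" where
  "block L x i = take L (drop (i * L) x)"

definition replace_block :: "nat \<Rightarrow> 'a list \<Rightarrow> nat \<Rightarrow> 'a list \<Rightarrow> 'a list" where
  "replace_block L x i w = take (i * L) x @ w @ drop (i * L + L) x"

lemma block_end_le: "i < length x div L \<Longrightarrow> i * L + L \<le> length x"
proof -
  assume "i < length x div L"
  then have "Suc i * L \<le> length x div L * L" by (intro mult_le_mono1) simp
  also have "\<dots> \<le> length x" by simp
  finally show ?thesis by simp
qed

lemma length_replace_block [simp]: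
  "i < length x div L \<Longrightarrow> length w = L \<Longrightarrow> length (replace_block L x i w) = length x"
  using block_end_le[of i x L] by (simp add: replace_block_def)

lemma block_replace_block_same:
  "i < length x div L \<Longrightarrow> length w = L \<Longrightarrow> block L (replace_block L x i w) i = w"
  using block_end_le[of i x L] by (simp add: block_def replace_block_def)

lemma block_replace_block_before:
  assumes "j < i" "i < length x div L"
  shows "block L (replace_block L x i w) j = block L x j"
proof -
  have "j * L + L \<le> i * L" using assms(1) mult_le_mono1[of "Suc j" i L] by simp
  then show ?thesis
    using block_end_le[OF assms(2)]
    by (auto simp add: block_def replace_block_def drop_take take_append min_def)
qed

lemma replace_block_block: "i < length x div L \<Longrightarrow> replace_block L x i (block L x i) = x"
  using block_end_le[of i x L]
  by (simp add: block_def replace_block_def) (metis add.commute append_take_drop_id drop_drop)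

lemma replace_block_replace_block:
  "i < length x div L \<Longrightarrow> length w = L \<Longrightarrow>
    replace_block L (replace_block L x i w) i w' = replace_block L x i w'"
  using block_end_le[of i x L] by (simp add: replace_block_def)

lemma replace_block_in_seqs:
  "x \<in> seqs q n \<Longrightarrow> w \<in> seqs q L \<Longrightarrow> i < n div L \<Longrightarrow> replace_block L x i w \<in> seqs q n"
  unfolding seqs_def replace_block_def using block_end_le[of i x L]
  by (auto dest: in_set_takeD in_set_dropD)

definition has_block :: "nat \<Rightarrow> 'a list set \<Rightarrow> 'a list \<Rightarrow> bool" where
  "has_block L W x \<longleftrightarrow> (\<exists>i < length x div L. block L x i \<in> W)"

definition first_block :: "nat \<Rightarrow> 'a list set \<Rightarrow> 'a list \<Rightarrow> nat" where
  "first_block L W x = (LEAST i. i < length x div L \<and> block L x i \<in> W)"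

lemma has_block_first_block:
  "has_block L W x \<Longrightarrow> first_block L W x < length x div L \<and> block L x (first_block L W x) \<in> W"
  unfolding has_block_def first_block_def by (rule LeastI_ex)

lemma first_block_replace_block:
  assumes "has_block L W x" "w \<in> W" "length w = L"
  shows "first_block L W (replace_block L x (first_block L W x) w) = first_block L W x"
proof -
  let ?i = "first_block L W x"
  have i: "?i < length x div L" using has_block_first_block[OF assms(1)] by simp
  show ?thesis
    unfolding first_block_def[of L W "replace_block L x ?i w"]
  proof (rule Least_equality)
    show "?i < length (replace_block L x ?i w) div L \<and> block L (replace_block L x ?i w) ?i \<in> W"
      using i assms by (simp add: block_replace_block_same)
  next
    fix j assume j: "j < length (replace_block L x ?i w) div L \<and> block L (replace_block L x ?i w) j \<in> W"
    show "?i \<le> j"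
    proof (rule ccontr)
      assume "\<not> ?i \<le> j"
      then have "j < length x div L \<and> block L x j \<in> W"
        using i j assms(3) by (simp add: block_replace_block_before)
      then have "?i \<le> j"
        unfolding first_block_def by (rule Least_le)
      with \<open>\<not> ?i \<le> j\<close> show False by simp
    qed
  qed
qed

lemma finite_seqs: "finite (seqs q n)"
  using finite_lists_length_eq[of "{..<q}" n] unfolding seqs_def by (simp add: conj_commute)

lemma card_seqs: "card (seqs q n) = q ^ n"
  using card_lists_length_eq[of "{..<q}" n] unfolding seqs_def by (simp add: conj_commute)

lemma card_without_blocks_le:
  assumes "W \<subseteq> seqs q L"
  shows "card {x \<in> seqs q (k * L + t). \<forall>i<k. block L x i \<notin> W} \<le> (q ^ L - card W) ^ k * q ^ t"
proof (induction k)
  case 0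
  then show ?case by (simp add: card_seqs)
next
  case (Suc k)
  let ?N = "\<lambda>k. {x \<in> seqs q (k * L + t). \<forall>i<k. block L x i \<notin> W}"
  have "?N (Suc k) \<subseteq> (\<lambda>(b, y). b @ y) ` ((seqs q L - W) \<times> ?N k)"
  proof
    fix x assume "x \<in> ?N (Suc k)"
    then have x: "x \<in> seqs q (L + (k * L + t))" and blocks: "\<forall>i<Suc k. block L x i \<notin> W"
      by (simp_all add: add.assoc)
    have "block L x (Suc i) = block L (drop L x) i" for i
      unfolding block_def by (simp add: add.commute)
    moreover have "take L x \<in> seqs q L" "drop L x \<in> seqs q (k * L + t)"
      using x unfolding seqs_def by (auto dest: in_set_takeD in_set_dropD)
    moreover have "take L x \<notin> W"
      using blocks[rule_format, of 0] by (simp add: block_def)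
    ultimately have "(take L x, drop L x) \<in> (seqs q L - W) \<times> ?N k"
      using blocks by auto
    then show "x \<in> (\<lambda>(b, y). b @ y) ` ((seqs q L - W) \<times> ?N k)"
      by (metis (no_types, lifting) append_take_drop_id case_prod_conv image_eqI)
  qed
  moreover have fin: "finite ((seqs q L - W) \<times> ?N k)"
    using finite_seqs[of q L] finite_seqs[of q "k * L + t"] by (simp add: finite_subset)
  ultimately have "card (?N (Suc k)) \<le> card ((seqs q L - W) \<times> ?N k)"
    by (meson card_image_le card_mono finite_imageI le_trans)
  also have "\<dots> = (q ^ L - card W) * card (?N k)"
    using assms finite_subset[OF assms finite_seqs]
    by (simp add: card_cartesian_product card_Diff_subset card_seqs)
  also have "\<dots> \<le> (q ^ L - card W) ^ Suc k * q ^ t"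
    using Suc.IH by simp
  finally show ?case .
qed

lemma card_with_block_mult_le:
  assumes W: "W \<subseteq> seqs q L" and C: "C \<subseteq> seqs q n"
    and separated:
      "\<And>u v w w'. w \<in> W \<Longrightarrow> w' \<in> W \<Longrightarrow> u @ w @ v \<in> C \<Longrightarrow> u @ w' @ v \<in> C \<Longrightarrow> w = w'"
  shows "card {x \<in> C. has_block L W x} * card W \<le> q ^ n"
proof -
  let ?A = "{x \<in> C. has_block L W x}"
  define f where "f = (\<lambda>(x, w). replace_block L x (first_block L W x) w)"
  have length_W: "length w = L" if "w \<in> W" for w
    using that W by (auto simp: seqs_def)
  have "inj_on f (?A \<times> W)"
  proof (rule inj_onI, clarify)
    fix x w y w'
    assume x: "x \<in> C" "has_block L W x" "w \<in> W" and y: "y \<in> C" "has_block L W y" "w' \<in> W"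
      and eq: "f (x, w) = f (y, w')"
    define i where "i = first_block L W x"
    define z where "z = replace_block L x i w"
    have ix: "i < length x div L" "block L x i \<in> W"
      using has_block_first_block[OF x(2)] by (simp_all add: i_def)
    have "first_block L W y = first_block L W z"
      using eq first_block_replace_block[OF y(2,3) length_W[OF y(3)]] by (simp add: f_def z_def i_def)
    also have "\<dots> = i"
      using first_block_replace_block[OF x(2,3) length_W[OF x(3)]] by (simp add: z_def i_def)
    finally have iy: "i < length y div L" "block L y i \<in> W" and z: "z = replace_block L y i w'"
      using has_block_first_block[OF y(2)] eq by (simp_all add: f_def z_def i_def)
    have "w = block L z i" using ix length_W[OF x(3)] by (simp add: z_def block_replace_block_same)
    also have "\<dots> = w'" using iy length_W[OF y(3)] by (simp add: z block_replace_block_same)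
    finally have "w = w'" .
    have x_eq: "x = replace_block L z i (block L x i)"
      using ix length_W[OF x(3)] by (simp add: z_def replace_block_replace_block replace_block_block)
    have y_eq: "y = replace_block L z i (block L y i)"
      using iy length_W[OF y(3)] by (simp add: z replace_block_replace_block replace_block_block)
    have "replace_block L z i (block L x i) \<in> C" "replace_block L z i (block L y i) \<in> C"
      using x(1) y(1) x_eq[symmetric] y_eq[symmetric] by simp_all
    then have "block L x i = block L y i"
      using separated[OF ix(2) iy(2)] unfolding replace_block_def by simp
    with x_eq y_eq \<open>w = w'\<close> show "x = y \<and> w = w'" by simp
  qed
  moreover have "f ` (?A \<times> W) \<subseteq> seqs q n"
  proof clarify
    fix x w assume "x \<in> C" "has_block L W x" "w \<in> W"
    moreover have "length x = n" using \<open>x \<in> C\<close> C by (auto simp: seqs_def)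
    ultimately show "f (x, w) \<in> seqs q n"
      using C W has_block_first_block[of L W x] replace_block_in_seqs[of x q n w L] by (auto simp: f_def)
  qed
  ultimately have "card (?A \<times> W) \<le> card (seqs q n)"
    using card_inj_on_le finite_seqs by blast
  then show ?thesis by (simp add: card_cartesian_product card_seqs)
qed

lemma card_block_separated_le:
  assumes W: "W \<subseteq> seqs q L" and C: "C \<subseteq> seqs q n"
    and separated:
      "\<And>u v w w'. w \<in> W \<Longrightarrow> w' \<in> W \<Longrightarrow> u @ w @ v \<in> C \<Longrightarrow> u @ w' @ v \<in> C \<Longrightarrow> w = w'"
  shows "card C * card W \<le> card W * (q ^ L - card W) ^ (n div L) * q ^ (n mod L) + q ^ n"
proof -
  let ?N = "{x \<in> seqs q (n div L * L + n mod L). \<forall>i < n div L. block L x i \<notin> W}"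
  let ?A\<^sub>0 = "{x \<in> C. \<not> has_block L W x}" and ?A\<^sub>1 = "{x \<in> C. has_block L W x}"
  have "?A\<^sub>0 \<subseteq> ?N"
    using C by (auto simp: has_block_def seqs_def)
  then have "card ?A\<^sub>0 \<le> card ?N"
    by (intro card_mono) (auto intro: rev_finite_subset[OF finite_seqs])
  also have "\<dots> \<le> (q ^ L - card W) ^ (n div L) * q ^ (n mod L)"
    by (rule card_without_blocks_le[OF W])
  finally have "card ?A\<^sub>0 * card W \<le> card W * (q ^ L - card W) ^ (n div L) * q ^ (n mod L)"
    by (simp add: mult.commute)
  moreover have "C = ?A\<^sub>0 \<union> ?A\<^sub>1"
    by blast
  then have "card C * card W \<le> card ?A\<^sub>0 * card W + card ?A\<^sub>1 * card W"
    by (metis add_mult_distrib card_Un_le mult_le_mono1)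
  moreover have "card ?A\<^sub>1 * card W \<le> q ^ n"
    using W C separated by (rule card_with_block_mult_le)
  ultimately show ?thesis by linarith
qed

lemma card_alt_flip_free_le:
  assumes "2 \<le> q" "C \<subseteq> seqs q n" "alt_flip_free C"
  shows "card C * (L + 1) \<le> (L + 1) * (q ^ L - (L + 1)) ^ (n div L) * q ^ (n mod L) + q ^ n"
proof -
  let ?W = "shifted_alt L ` {..L}"
  have "card ?W = L + 1"
    using inj_on_shifted_alt by (simp add: card_image)
  moreover have "?W \<subseteq> seqs q L"
    using shifted_alt_in_seqs assms(1) by auto
  moreover have "w = w'"
    if W: "w \<in> ?W" "w' \<in> ?W" and C: "u @ w @ v \<in> C" "u @ w' @ v \<in> C" for u v w w'
  proof -
    obtain j k where "j \<le> L" "k \<le> L" "w = shifted_alt L j" "w' = shifted_alt L k"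
      using W by auto
    then show ?thesis using alt_flip_free_shifted_alt_eq[OF assms(3), of j L k u v] C by simp
  qed
  ultimately show ?thesis
    using card_block_separated_le[of ?W q L C n] assms(2) by simp
qed

lemma one_minus_power_le_exp:
  fixes a :: real
  assumes "0 \<le> a" "a \<le> 1"
  shows "(1 - a) ^ m \<le> exp (- (m * a))"
proof -
  have "(1 - a) ^ m \<le> exp (- a) ^ m"
    using assms exp_ge_add_one_self[of "- a"] by (intro power_mono) simp_all
  then show ?thesis by (simp flip: exp_of_nat_mult)
qed

lemma card_alt_flip_free_le_real:
  assumes q: "2 \<le> q" and L: "1 \<le> L" and C: "C \<subseteq> seqs q n" "alt_flip_free C"
  shows "real (card C) \<le> real q ^ n * (1 / (L + 1) + exp (1 - n / real q ^ L))"
proof -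
  define c where "c = real q"
  define s where "s = real L + 1"
  define Q where "Q = c ^ L"
  define m where "m = n div L"
  have n: "n = L * m + n mod L" unfolding m_def by simp
  have "(2::nat) ^ L \<le> q ^ L" using q by (simp add: power_mono)
  then have "L + 1 \<le> q ^ L" using less_exp[of L] by linarith
  then have s_le_Q: "s \<le> Q" and s_pos: "0 < s"
    unfolding s_def Q_def c_def by (simp_all flip: of_nat_power of_nat_Suc)
  have "real (card C * (L + 1)) \<le> real ((L + 1) * (q ^ L - (L + 1)) ^ m * q ^ (n mod L) + q ^ n)"
    using card_alt_flip_free_le[OF q C] unfolding m_def by (rule of_nat_mono)
  moreover have "real (q ^ L - (L + 1)) = Q - s"
    using \<open>L + 1 \<le> q ^ L\<close> by (simp add: s_def Q_def c_def of_nat_diff)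
  ultimately have card_le: "real (card C) * s \<le> s * ((Q - s) ^ m * c ^ (n mod L)) + c ^ n"
    unfolding of_nat_add of_nat_mult of_nat_power by (simp add: s_def c_def)
  have "(Q - s) ^ m * c ^ (n mod L) = (1 - s / Q) ^ m * c ^ n"
  proof -
    have "c ^ n = Q ^ m * c ^ (n mod L)"
      unfolding Q_def by (subst n) (simp only: power_add power_mult)
    moreover have "Q - s = (1 - s / Q) * Q" using s_le_Q s_pos by (simp add: field_simps)
    ultimately show ?thesis by (simp add: power_mult_distrib)
  qed
  with card_le have card_le: "real (card C) * s \<le> s * ((1 - s / Q) ^ m * c ^ n) + c ^ n"
    by simp
  have "n < L * m + L" using n L mod_less_divisor[of L n] by linarith
  then have "real n - Q \<le> m * s"
    using s_le_Q unfolding s_def by (simp add: algebra_simps flip: of_nat_mult of_nat_add)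
  then have exponent_le: "- (m * (s / Q)) \<le> 1 - n / Q"
    using s_le_Q s_pos by (simp add: field_simps)
  have "(1 - s / Q) ^ m \<le> exp (- (m * (s / Q)))"
    using s_le_Q s_pos by (intro one_minus_power_le_exp) simp_all
  also have "\<dots> \<le> exp (1 - n / Q)"
    using exponent_le by simp
  finally have "(1 - s / Q) ^ m \<le> exp (1 - n / Q)" .
  then have "s * ((1 - s / Q) ^ m * c ^ n) \<le> s * (exp (1 - n / Q) * c ^ n)"
    using s_pos by (intro mult_left_mono mult_right_mono) (simp_all add: c_def)
  with card_le have "real (card C) * s \<le> s * (exp (1 - n / Q) * c ^ n) + c ^ n"
    by linarith
  then have "real (card C) \<le> c ^ n * (1 / s + exp (1 - n / Q))"
    using s_pos by (simp add: field_simps)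
  then show ?thesis by (simp add: c_def s_def Q_def)
qed

lemma redundancy_nonneg:
  assumes "2 \<le> q" "C \<noteq> {}" "C \<subseteq> seqs q n"
  shows "0 \<le> redundancy q n C"
proof -
  have "card C \<le> q ^ n"
    using card_mono[OF finite_seqs assms(3)] by (simp add: card_seqs)
  then have "real (card C) \<le> real q ^ n" by (simp flip: of_nat_power)
  moreover have "0 < card C"
    using assms(2,3) finite_subset[OF assms(3) finite_seqs] by (simp add: card_gt_0_iff)
  ultimately have "log q (card C) \<le> log q (real q ^ n)"
    using assms(1) by (subst log_le_cancel_iff) auto
  then show ?thesis
    using assms(1) by (simp add: redundancy_def log_nat_power)
qed

lemma redundancy_alt_flip_free_ge:
  assumes q: "2 \<le> q" and L: "1 \<le> L" and C: "C \<noteq> {}" "C \<subseteq> seqs q n" "alt_flip_free C"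
  shows "log q (L + 1) - log q (1 + (L + 1) * exp (1 - n / real q ^ L)) \<le> redundancy q n C"
proof -
  define c where "c = real q"
  define s where "s = real L + 1"
  define e where "e = exp (1 - n / real q ^ L)"
  have c: "1 < c" using q by (simp add: c_def)
  have s: "0 < s" by (simp add: s_def)
  have e: "0 < 1 + s * e" using s by (simp add: e_def add_pos_pos)
  have "0 < card C"
    using C finite_subset[OF C(2) finite_seqs] by (simp add: card_gt_0_iff)
  moreover have "real (card C) \<le> c ^ n * ((1 + s * e) / s)"
    using card_alt_flip_free_le_real[OF q L C(2,3)] s
    by (simp add: c_def s_def e_def add_divide_distrib)
  ultimately have "log c (card C) \<le> log c (c ^ n * ((1 + s * e) / s))"
    using c s e by (subst log_le_cancel_iff) auto
  also have "\<dots> = n + log c (1 + s * e) - log c s"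
    using c s e by (simp add: log_mult log_divide log_nat_power)
  finally show ?thesis
    by (simp add: redundancy_def c_def s_def e_def)
qed

text \<open>With l = log q n and blocks of length L = floor (l - sqrt l), the first term accounts for
  L + 1 > l - sqrt l and the second for the words without a block from the separating family,
  using n / q ^ L \<ge> 2 powr sqrt l.\<close>
definition loglog_defect :: "real \<Rightarrow> real \<Rightarrow> real" where
  "loglog_defect c l = log c (l / (l - sqrt l)) + log c (1 + (l + 1) * exp (1 - 2 powr sqrt l))"

lemma loglog_defect_tendsto_0:
  assumes "1 < c"
  shows "(loglog_defect c \<longlongrightarrow> 0) at_top"
proof -
  have "((\<lambda>l::real. ln (l / (l - sqrt l)) + ln (1 + (l + 1) * exp (1 - 2 powr sqrt l)))
      \<longlongrightarrow> 0) at_top"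
    by real_asymp
  then have "((\<lambda>l. (ln (l / (l - sqrt l)) + ln (1 + (l + 1) * exp (1 - 2 powr sqrt l))) / ln c)
      \<longlongrightarrow> 0 / ln c) at_top"
    by (rule tendsto_divide) (use assms in auto)
  then show ?thesis
    unfolding loglog_defect_def log_def by (simp add: add_divide_distrib)
qed

lemma redundancy_alt_flip_free_ge_loglog:
  assumes q: "2 \<le> q" and C: "C \<noteq> {}" "C \<subseteq> seqs q n" "alt_flip_free C"
    and large: "1 \<le> log q n - sqrt (log q n)"
  shows "log q (log q n) - loglog_defect q (log q n) \<le> redundancy q n C"
proof -
  define c where "c = real q"
  define l where "l = log c n"
  define L where "L = nat \<lfloor>l - sqrt l\<rfloor>"
  have c: "2 \<le> c" using q by (simp add: c_def)
  have large: "1 \<le> l - sqrt l" using large by (simp add: l_def c_def)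
  then have "0 < n" by (cases n) (simp_all add: l_def log_def)
  then have n: "c powr l = n" and "0 \<le> l" using c by (simp_all add: l_def)
  then have l: "0 \<le> sqrt l" "0 < l"
    using large real_sqrt_ge_zero[OF \<open>0 \<le> l\<close>] by linarith+
  have L: "1 \<le> L" "real L \<le> l - sqrt l" "l - sqrt l < real L + 1"
    using large unfolding L_def by linarith+
  have "c ^ L \<le> c powr (l - sqrt l)"
    using L c by (simp add: powr_realpow[symmetric] powr_mono)
  also have "\<dots> = n / c powr sqrt l"
    using n by (simp add: powr_diff)
  finally have "c powr sqrt l \<le> n / c ^ L"
    using c by (simp add: field_simps)
  moreover have "2 powr sqrt l \<le> c powr sqrt l"
    using c l by (intro powr_mono2) simp_all
  ultimately have "2 powr sqrt l \<le> n / c ^ L" by linarith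
  moreover have "real L + 1 \<le> l + 1" using L l by linarith
  ultimately have "(L + 1) * exp (1 - n / c ^ L) \<le> (l + 1) * exp (1 - 2 powr sqrt l)"
    using l by (intro mult_mono) simp_all
  then have "log c (1 + (L + 1) * exp (1 - n / c ^ L)) \<le> log c (1 + (l + 1) * exp (1 - 2 powr sqrt l))"
    using c l by (subst log_le_cancel_iff) (auto intro: add_pos_nonneg)
  moreover have "log c (l - sqrt l) \<le> log c (L + 1)"
    using c L large by (subst log_le_cancel_iff) auto
  moreover have "log c (l - sqrt l) = log c l - log c (l / (l - sqrt l))"
    using c l large by (simp add: log_divide)
  ultimately show ?thesis
    using redundancy_alt_flip_free_ge[OF q L(1) C]
    by (simp add: loglog_defect_def c_def l_def add.commute)
qed

lemma filterlim_log_sequentially: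
  assumes "1 < c"
  shows "filterlim (\<lambda>n. log c (real n)) at_top sequentially"
proof -
  have "filterlim (\<lambda>n. (1 / ln c) * ln (real n)) at_top sequentially"
    using assms by (intro filterlim_tendsto_pos_mult_at_top[OF tendsto_const]
        filterlim_compose[OF ln_at_top filterlim_real_sequentially]) simp
  then show ?thesis by (simp add: log_def)
qed

theorem theorem5:
  fixes q :: nat
  assumes "q \<ge> 2"
  shows "\<exists>\<epsilon> :: nat \<Rightarrow> real. \<epsilon> \<longlonglongrightarrow> 0 \<and>
    (\<forall>n C. C \<noteq> {} \<and> (two_read_code q n 3 C \<or> recon_code q n C) \<longrightarrow>
       redundancy q n C \<ge> log (real q) (log (real q) (real n)) - \<epsilon> n)"
proof -
  let ?l = "\<lambda>n. log q (real n)"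
  define \<epsilon> where
    "\<epsilon> n = (if 1 \<le> ?l n - sqrt (?l n) then loglog_defect q (?l n) else log q (?l n))" for n
  have q: "1 < real q" using assms by simp
  have "filterlim (\<lambda>n. ?l n - sqrt (?l n)) at_top sequentially"
    using filterlim_log_sequentially[OF q] by (rule filterlim_compose[rotated]) real_asymp
  then have "eventually (\<lambda>n. loglog_defect q (?l n) = \<epsilon> n) sequentially"
    unfolding filterlim_at_top by (rule eventually_mono[OF spec[of _ 1]]) (simp add: \<epsilon>_def)
  moreover have "(\<lambda>n. loglog_defect q (?l n)) \<longlonglongrightarrow> 0"
    using loglog_defect_tendsto_0[OF q] filterlim_log_sequentially[OF q] by (rule filterlim_compose)
  ultimately have "\<epsilon> \<longlonglongrightarrow> 0" by (rule Lim_transform_eventually[rotated])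
  moreover have "log q (?l n) - \<epsilon> n \<le> redundancy q n C"
    if "C \<noteq> {}" "two_read_code q n 3 C \<or> recon_code q n C" for n C
  proof -
    have "C \<subseteq> seqs q n" "alt_flip_free C"
      using that assms two_read_code_alt_flip_free recon_code_alt_flip_free
      unfolding two_read_code_def recon_code_def by blast+
    then show ?thesis
      using redundancy_alt_flip_free_ge_loglog[OF assms] redundancy_nonneg[OF assms] that(1)
      by (simp add: \<epsilon>_def)
  qed
  ultimately show ?thesis by blast
qed

end
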